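(* Let $X$ be a digraph containing a set of $m$ vertices no two of which form a digon. Then $\eta^+(X)\ge\lceil m/2\rceil$ and $\eta^-(X)\ge \lceil m/2\rceil$.
   Context: A digraph $X$ has a finite vertex set and an arc set of ordered pairs of distinct vertices; $\{x,y\}$ is a digon if both $xy,yx$ are arcs. The Hermitian adjacency matrix $H(X)$ has $(u,v)$-entry $1$ if $uv$ and $vu$ are arcs, $i$ if only $uv$ is an arc, $-i$ if only $vu$ is an arc, and $0$ otherwise. $\eta^+(X)$ (resp. $\eta^-(X)$) is the number of non-negative (resp. non-positive) eigenvalues of $H(X)$, counted with multiplicity. *)

theory Defs
  imports "Jordan_Normal_Form.Char_Poly"
begin

definition is_digraph :: "nat \<Rightarrow> (nat \<times> nat) set \<Rightarrow> bool" where
  "is_digraph n A \<longleftrightarrow> A \<subseteq> {0..<n} \<times> {0..<n} \<and> (\<forall>x. (x, x) \<notin> A)"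

definition herm_adj :: "nat \<Rightarrow> (nat \<times> nat) set \<Rightarrow> complex mat" where
  "herm_adj n A = mat n n (\<lambda>(u, v).
     if (u, v) \<in> A \<and> (v, u) \<in> A then 1
     else if (u, v) \<in> A then \<i>
     else if (v, u) \<in> A then - \<i>
     else 0)"

definition eta_plus :: "nat \<Rightarrow> (nat \<times> nat) set \<Rightarrow> nat" where
  "eta_plus n A = (\<Sum>x \<in> {x. poly (char_poly (herm_adj n A)) x = 0 \<and> Im x = 0 \<and> Re x \<ge> 0}.
                     order x (char_poly (herm_adj n A)))"

definition eta_minus :: "nat \<Rightarrow> (nat \<times> nat) set \<Rightarrow> nat" where
  "eta_minus n A = (\<Sum>x \<in> {x. poly (char_poly (herm_adj n A)) x = 0 \<and> Im x = 0 \<and> Re x \<le> 0}.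
                     order x (char_poly (herm_adj n A)))"

end

theory Submission
  imports Defs "Jordan_Normal_Form.Schur_Decomposition" "Jordan_Normal_Form.Spectral_Radius"
begin

text \<open>By the spectral theorem \<open>H = U diag(d) U\<^sup>*\<close> with \<open>U\<close> unitary and \<open>d\<close> real, and
  \<open>\<eta>\<^sup>+\<close>, \<open>\<eta>\<^sup>-\<close> count the \<open>d\<^sub>p \<ge> 0\<close> resp. \<open>d\<^sub>p \<le> 0\<close>. As \<open>S\<close> contains no digon, \<open>H\<close> is
  skew on \<open>S \<times> S\<close>, so \<open>x\<^sup>* H x = 0\<close> for every real vector \<open>x\<close> supported on \<open>S\<close>.
  If \<open>2 #{p. d\<^sub>p \<ge> 0} < |S|\<close>, the real and imaginary parts of the coordinates \<open>(U\<^sup>* x)\<^sub>p\<close>,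
  \<open>d\<^sub>p \<ge> 0\<close>, are too few linear conditions to force such an \<open>x\<close> to vanish. For a nonzero
  solution \<open>0 = x\<^sup>* H x = \<Sum>\<^sub>p d\<^sub>p |(U\<^sup>* x)\<^sub>p|\<^sup>2\<close> is a sum of non-positive terms, so
  \<open>U\<^sup>* x = 0\<close> and \<open>x = 0\<close>, a contradiction. Replacing \<open>H\<close> by \<open>-H\<close> gives the bound for \<open>\<eta>\<^sup>-\<close>.\<close>

lemma mat_adjoint_dims [simp]:
  "dim_row (mat_adjoint A) = dim_col A" "dim_col (mat_adjoint A) = dim_row A"
  by (simp_all add: mat_adjoint_def)

lemma mat_adjoint_carrier [simp]: "A \<in> carrier_mat n m \<Longrightarrow> mat_adjoint A \<in> carrier_mat m n"
  unfolding carrier_mat_def by simp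

lemma mat_adjoint_index [simp]:
  "i < dim_col A \<Longrightarrow> j < dim_row A \<Longrightarrow> mat_adjoint A $$ (i, j) = conjugate (A $$ (j, i))"
  unfolding mat_adjoint_def by (subst mat_of_rows_index) auto

lemma mat_adjoint_adjoint [simp]: "mat_adjoint (mat_adjoint A) = A"
  by (rule eq_matI) auto

lemma mat_adjoint_mult:
  fixes A B :: "complex mat"
  assumes "A \<in> carrier_mat n k" "B \<in> carrier_mat k m"
  shows "mat_adjoint (A * B) = mat_adjoint B * mat_adjoint A"
  using assms by (intro eq_matI) (auto simp: scalar_prod_def mult.commute)

lemma mat_adjoint_one [simp]: "mat_adjoint (1\<^sub>m n :: complex mat) = 1\<^sub>m n"
  by (rule eq_matI) auto

lemma unitary_right_inverse:
  fixes U :: "complex mat"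
  assumes "U \<in> carrier_mat n n" "mat_adjoint U * U = 1\<^sub>m n"
  shows "U * mat_adjoint U = 1\<^sub>m n"
  using mat_mult_left_right_inverse[of "mat_adjoint U" n U] assms by simp

definition block_diag :: "'a :: zero \<Rightarrow> 'a mat \<Rightarrow> 'a mat" where
  "block_diag c M = mat (Suc (dim_row M)) (Suc (dim_col M)) (\<lambda>(i, j).
     if i = 0 \<and> j = 0 then c else if i = 0 \<or> j = 0 then 0 else M $$ (i - 1, j - 1))"

lemma block_diag_dims [simp]:
  "dim_row (block_diag c M) = Suc (dim_row M)" "dim_col (block_diag c M) = Suc (dim_col M)"
  by (simp_all add: block_diag_def)

lemma block_diag_carrier [simp]: "M \<in> carrier_mat n m \<Longrightarrow> block_diag c M \<in> carrier_mat (Suc n) (Suc m)"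
  unfolding carrier_mat_def by simp

lemma block_diag_index:
  "i < Suc (dim_row M) \<Longrightarrow> j < Suc (dim_col M) \<Longrightarrow> block_diag c M $$ (i, j) =
     (if i = 0 \<and> j = 0 then c else if i = 0 \<or> j = 0 then 0 else M $$ (i - 1, j - 1))"
  by (simp add: block_diag_def)

lemma mat_adjoint_block_diag:
  "mat_adjoint (block_diag c M :: complex mat) = block_diag (cnj c) (mat_adjoint M)"
  by (rule eq_matI) (auto simp: block_diag_index)

lemma block_diag_mult:
  fixes M N :: "'a :: semiring_0 mat"
  assumes "M \<in> carrier_mat n k" "N \<in> carrier_mat k m"
  shows "block_diag a M * block_diag b N = block_diag (a * b) (M * N)"
proof (rule eq_matI)
  fix i j assume "i < dim_row (block_diag (a * b) (M * N))" "j < dim_col (block_diag (a * b) (M * N))"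
  then have i: "i < Suc n" and j: "j < Suc m" using assms by auto
  have "(block_diag a M * block_diag b N) $$ (i, j) =
    (\<Sum>l<Suc k. block_diag a M $$ (i, l) * block_diag b N $$ (l, j))"
    using i j assms by (simp add: scalar_prod_def atLeast0LessThan)
  also have "\<dots> = block_diag a M $$ (i, 0) * block_diag b N $$ (0, j)
      + (\<Sum>l<k. block_diag a M $$ (i, Suc l) * block_diag b N $$ (Suc l, j))"
    by (simp only: sum.lessThan_Suc_shift)
  also have "\<dots> = block_diag (a * b) (M * N) $$ (i, j)"
    using i j assms
    by (cases i; cases j) (auto simp: block_diag_index scalar_prod_def atLeast0LessThan)
  finally show "(block_diag a M * block_diag b N) $$ (i, j) = block_diag (a * b) (M * N) $$ (i, j)" .
qed (use assms in auto)

lemma block_diag_one: "block_diag 1 (1\<^sub>m n) = 1\<^sub>m (Suc n)"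
  by (rule eq_matI) (auto simp: block_diag_index)

lemma hermitian_block_diag_first_col:
  fixes M :: "complex mat"
  assumes M: "M \<in> carrier_mat (Suc n) (Suc n)" "mat_adjoint M = M"
    and col0: "\<And>k. k < Suc n \<Longrightarrow> M $$ (k, 0) = (if k = 0 then c else 0)"
  shows "M = block_diag c (mat n n (\<lambda>(i, j). M $$ (Suc i, Suc j)))"
proof (rule eq_matI)
  fix i j assume "i < dim_row (block_diag c (mat n n (\<lambda>(i, j). M $$ (Suc i, Suc j))))"
    "j < dim_col (block_diag c (mat n n (\<lambda>(i, j). M $$ (Suc i, Suc j))))"
  then have i: "i < Suc n" and j: "j < Suc n" by auto
  have row0: "M $$ (0, j) = cnj (M $$ (j, 0))"
    using mat_adjoint_index[of 0 M j] M i j by auto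
  show "M $$ (i, j) = block_diag c (mat n n (\<lambda>(i, j). M $$ (Suc i, Suc j))) $$ (i, j)"
    using i j row0 col0[OF i] col0[OF j] by (cases i; cases j) (auto simp: block_diag_index)
qed (use M in auto)

definition real_diag_mat :: "nat \<Rightarrow> (nat \<Rightarrow> real) \<Rightarrow> complex mat" where
  "real_diag_mat n d = mat n n (\<lambda>(i, j). if i = j then complex_of_real (d i) else 0)"

lemma real_diag_mat_dims [simp]: "dim_row (real_diag_mat n d) = n" "dim_col (real_diag_mat n d) = n"
  by (simp_all add: real_diag_mat_def)

lemma real_diag_mat_carrier [simp]: "real_diag_mat n d \<in> carrier_mat n n"
  unfolding carrier_mat_def by simp

lemma real_diag_mat_Suc:
  "real_diag_mat (Suc n) d = block_diag (complex_of_real (d 0)) (real_diag_mat n (\<lambda>p. d (Suc p)))"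
  by (rule eq_matI) (auto simp: block_diag_index real_diag_mat_def)

lemma real_diag_mat_uminus: "real_diag_mat n (\<lambda>p. - d p) = - real_diag_mat n d"
  by (rule eq_matI) (auto simp: real_diag_mat_def)

definition normalize_vec :: "complex vec \<Rightarrow> complex vec" where
  "normalize_vec w = complex_of_real (1 / sqrt (Re (w \<bullet>c w))) \<cdot>\<^sub>v w"

lemma cscalar_prod_smult:
  fixes v w :: "complex vec"
  assumes "v \<in> carrier_vec n" "w \<in> carrier_vec n"
  shows "(a \<cdot>\<^sub>v v) \<bullet>c (b \<cdot>\<^sub>v w) = a * cnj b * (v \<bullet>c w)"
  using assms by (simp add: scalar_prod_def sum_distrib_left ac_simps)

lemma normalize_vec_unit:
  assumes w: "w \<in> carrier_vec n" "w \<noteq> 0\<^sub>v n"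
  shows "normalize_vec w \<bullet>c normalize_vec w = 1"
proof -
  have "w \<bullet>c w > 0" using w by simp
  then obtain r where r: "w \<bullet>c w = complex_of_real r" "r > 0"
    by (metis complex_is_Real_iff less_complex_def of_real_Re zero_complex.sel(1,2))
  have "normalize_vec w \<bullet>c normalize_vec w
      = complex_of_real (1 / sqrt r) * cnj (complex_of_real (1 / sqrt r)) * complex_of_real r"
    unfolding normalize_vec_def r(1) using w(1) r(1) by (simp only: cscalar_prod_smult Re_complex_of_real)
  also have "\<dots> = complex_of_real (1 / sqrt r * (1 / sqrt r) * r)"
    by (simp only: complex_cnj_complex_of_real of_real_mult)
  also have "1 / sqrt r * (1 / sqrt r) * r = 1"
    using r(2) by (simp add: field_simps)
  finally show ?thesis by simp
qed

lemma normalize_vec_orthonormal: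
  assumes ws: "set ws \<subseteq> carrier_vec n" "corthogonal ws" and i: "i < length ws" and j: "j < length ws"
  shows "normalize_vec (ws ! i) \<bullet>c normalize_vec (ws ! j) = (if i = j then 1 else 0)"
proof (cases "i = j")
  case True
  have "ws ! i \<bullet>c ws ! i \<noteq> 0" using corthogonalD[OF ws(2) i i] by simp
  then have "ws ! i \<noteq> 0\<^sub>v n" by auto
  then show ?thesis using True normalize_vec_unit[of "ws ! i" n] ws(1) i nth_mem by auto
next
  case False
  then have "ws ! i \<bullet>c ws ! j = 0" using corthogonalD[OF ws(2) i j] by simp
  then show ?thesis
    unfolding normalize_vec_def using False ws(1) i j nth_mem
    by (subst cscalar_prod_smult[of _ n]) auto
qed

lemma unitary_mat_of_orthonormal_cols:
  fixes us :: "complex vec list"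
  assumes us: "set us \<subseteq> carrier_vec n" "length us = n"
    and orth: "\<And>i j. i < n \<Longrightarrow> j < n \<Longrightarrow> us ! i \<bullet>c us ! j = (if i = j then 1 else 0)"
  shows "mat_adjoint (mat_of_cols n us) * mat_of_cols n us = 1\<^sub>m n"
proof (rule eq_matI)
  fix k l assume "k < dim_row (1\<^sub>m n :: complex mat)" "l < dim_col (1\<^sub>m n :: complex mat)"
  then have k: "k < n" and l: "l < n" by auto
  have "us ! k \<in> carrier_vec n" "us ! l \<in> carrier_vec n" using us k l nth_mem by auto
  then have "(mat_adjoint (mat_of_cols n us) * mat_of_cols n us) $$ (k, l) = us ! l \<bullet>c us ! k"
    using us k l by (auto simp: scalar_prod_def mat_of_cols_index mult.commute intro!: sum.cong)
  then show "(mat_adjoint (mat_of_cols n us) * mat_of_cols n us) $$ (k, l) = 1\<^sub>m n $$ (k, l)"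
    using orth[OF l k] k l by auto
qed (use us in auto)

lemma unitary_extension:
  fixes v :: "complex vec"
  assumes v: "v \<in> carrier_vec n" "v \<noteq> 0\<^sub>v n"
  obtains W c where "W \<in> carrier_mat n n" "mat_adjoint W * W = 1\<^sub>m n" "col W 0 = c \<cdot>\<^sub>v v"
proof -
  interpret cof_vec_space n "TYPE(complex)" .
  define b where "b = basis_completion v"
  have b: "set b \<subseteq> carrier_vec n" "distinct b" "\<not> lin_dep (set b)" "length b = n" "hd b = v"
    using basis_completion[OF v] unfolding b_def by auto
  have n: "n \<noteq> 0" using v by (cases n) auto
  then obtain vs where bv: "b = v # vs" using b(4,5) by (cases b) auto
  define ws where "ws = gram_schmidt n b"
  have ws: "set ws \<subseteq> carrier_vec n" "corthogonal ws" "length ws = n"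
    using gram_schmidt_result[OF b(1-3) ws_def] b(4) by auto
  have "hd ws = v" unfolding ws_def bv using v(1) by simp
  then have ws0: "ws ! 0 = v" using ws(3) n by (cases ws) auto
  define W where "W = mat_of_cols n (map normalize_vec ws)"
  show ?thesis
  proof
    show "W \<in> carrier_mat n n"
      unfolding W_def using ws(3) mat_of_cols_carrier(1)[of n "map normalize_vec ws"] by simp
    show "mat_adjoint W * W = 1\<^sub>m n"
      unfolding W_def using ws normalize_vec_orthonormal[OF ws(1,2)]
      by (intro unitary_mat_of_orthonormal_cols) (auto simp: normalize_vec_def)
    show "col W 0 = complex_of_real (1 / sqrt (Re (v \<bullet>c v))) \<cdot>\<^sub>v v"
      unfolding W_def using ws(1,3) n ws0 nth_mem[of 0 ws]
      by (subst col_mat_of_cols) (auto simp: normalize_vec_def)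
  qed
qed

lemma mat_adjoint_congruence:
  fixes A W :: "complex mat"
  assumes A: "A \<in> carrier_mat n n" and W: "W \<in> carrier_mat n n"
  shows "mat_adjoint (mat_adjoint W * A * W) = mat_adjoint W * mat_adjoint A * W"
proof -
  have "mat_adjoint (mat_adjoint W * A * W) = mat_adjoint W * mat_adjoint (mat_adjoint W * A)"
    by (rule mat_adjoint_mult[of _ n n]) (use A W in auto)
  also have "\<dots> = mat_adjoint W * (mat_adjoint A * W)"
    using A W by (simp add: mat_adjoint_mult[of _ n n _ n])
  finally show ?thesis
    using A W by (simp add: assoc_mult_mat[of _ n n _ n _ n])
qed

lemma unitary_congruence_first_col:
  fixes A W :: "complex mat"
  assumes A: "A \<in> carrier_mat n n" and W: "W \<in> carrier_mat n n" "mat_adjoint W * W = 1\<^sub>m n"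
    and eig: "A *\<^sub>v col W 0 = e \<cdot>\<^sub>v col W 0" and k: "k < n"
  shows "(mat_adjoint W * A * W) $$ (k, 0) = (if k = 0 then e else 0)"
proof -
  have "(mat_adjoint W * A * W) $$ (k, 0) = (mat_adjoint W * (A * W)) $$ (k, 0)"
    using A W by (subst assoc_mult_mat[of _ n n _ n _ n]) auto
  also have "\<dots> = row (mat_adjoint W) k \<bullet> col (A * W) 0"
    using A W k by (subst index_mult_mat) auto
  also have "col (A * W) 0 = e \<cdot>\<^sub>v col W 0"
    using A W k eig by (subst col_mult2) auto
  also have "row (mat_adjoint W) k \<bullet> (e \<cdot>\<^sub>v col W 0) = e * (row (mat_adjoint W) k \<bullet> col W 0)"
    using W k by (intro scalar_prod_smult_distrib[of _ n]) auto
  also have "row (mat_adjoint W) k \<bullet> col W 0 = (mat_adjoint W * W) $$ (k, 0)"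
    using W k by (subst index_mult_mat) auto
  finally show ?thesis using W(2) k by simp
qed

lemma unitary_conj_cancel:
  fixes A W :: "complex mat"
  assumes A: "A \<in> carrier_mat n n" and W: "W \<in> carrier_mat n n" "W * mat_adjoint W = 1\<^sub>m n"
  shows "W * (mat_adjoint W * A * W) * mat_adjoint W = A"
proof -
  have W': "mat_adjoint W \<in> carrier_mat n n" using W(1) by simp
  have "W * (mat_adjoint W * A * W) * mat_adjoint W = (W * mat_adjoint W) * A * (W * mat_adjoint W)"
    using A W(1) W' by (simp only: assoc_mult_mat[of _ n n _ n _ n] mult_carrier_mat)
  then show ?thesis using A W(2) by simp
qed

lemma conj_conj_mult:
  fixes W V D :: "complex mat"
  assumes "W \<in> carrier_mat n n" "V \<in> carrier_mat n n" "D \<in> carrier_mat n n"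
  shows "W * (V * D * mat_adjoint V) * mat_adjoint W = (W * V) * D * mat_adjoint (W * V)"
  using assms mat_adjoint_carrier[OF assms(1)] mat_adjoint_carrier[OF assms(2)]
  by (simp add: mat_adjoint_mult[of _ n n _ n] assoc_mult_mat[of _ n n _ n _ n]
    mult_carrier_mat[of _ n n _ n])

lemma unitary_mult:
  fixes U V :: "complex mat"
  assumes U: "U \<in> carrier_mat n n" "mat_adjoint U * U = 1\<^sub>m n"
    and V: "V \<in> carrier_mat n n" "mat_adjoint V * V = 1\<^sub>m n"
  shows "mat_adjoint (U * V) * (U * V) = 1\<^sub>m n"
proof -
  have "mat_adjoint (U * V) * (U * V) = mat_adjoint V * ((mat_adjoint U * U) * V)"
    using U(1) V(1) mat_adjoint_carrier[OF U(1)] mat_adjoint_carrier[OF V(1)]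
    by (simp add: mat_adjoint_mult[of _ n n _ n] assoc_mult_mat[of _ n n _ n _ n]
      mult_carrier_mat[of _ n n _ n])
  then show ?thesis using U V by simp
qed

lemma hermitian_deflation:
  fixes A :: "complex mat"
  assumes A: "A \<in> carrier_mat (Suc n) (Suc n)" "mat_adjoint A = A"
  obtains W e B where "W \<in> carrier_mat (Suc n) (Suc n)" "mat_adjoint W * W = 1\<^sub>m (Suc n)"
    "B \<in> carrier_mat n n" "mat_adjoint B = B"
    "A = W * block_diag (complex_of_real e) B * mat_adjoint W"
proof -
  obtain e where "eigenvalue A e" using spectrum_non_empty[OF A(1)] by (auto simp: spectrum_def)
  then obtain v where v: "v \<in> carrier_vec (Suc n)" "v \<noteq> 0\<^sub>v (Suc n)" "A *\<^sub>v v = e \<cdot>\<^sub>v v"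
    using A(1) by (auto simp: eigenvalue_def eigenvector_def)
  obtain W c where W: "W \<in> carrier_mat (Suc n) (Suc n)" "mat_adjoint W * W = 1\<^sub>m (Suc n)"
    and col0: "col W 0 = c \<cdot>\<^sub>v v"
    using unitary_extension[OF v(1,2)] by blast
  have "A *\<^sub>v col W 0 = c \<cdot>\<^sub>v (e \<cdot>\<^sub>v v)"
    unfolding col0 using A(1) v by (simp add: mult_mat_vec)
  then have eig: "A *\<^sub>v col W 0 = e \<cdot>\<^sub>v col W 0"
    unfolding col0 by (simp add: smult_smult_assoc mult.commute)
  define M where "M = mat_adjoint W * A * W"
  have M: "M \<in> carrier_mat (Suc n) (Suc n)" "mat_adjoint M = M"
    unfolding M_def using A W by (auto simp: mat_adjoint_congruence)
  have Mcol: "M $$ (k, 0) = (if k = 0 then e else 0)" if "k < Suc n" for k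
    unfolding M_def using unitary_congruence_first_col[OF A(1) W eig that] .
  have "cnj (M $$ (0, 0)) = M $$ (0, 0)"
    using mat_adjoint_index[of 0 M 0] M by simp
  then have e: "e = complex_of_real (Re e)"
    using Mcol[of 0] by (simp add: complex_eq_iff)
  define B where "B = mat n n (\<lambda>(i, j). M $$ (Suc i, Suc j))"
  have MB: "M = block_diag (complex_of_real (Re e)) B"
    unfolding B_def using hermitian_block_diag_first_col[OF M, of "complex_of_real (Re e)"] Mcol e
    by simp
  have "mat_adjoint B = B"
  proof (rule eq_matI)
    fix i j assume "i < dim_row B" "j < dim_col B"
    then have "i < n" "j < n" by (auto simp: B_def)
    then have "cnj (M $$ (Suc j, Suc i)) = M $$ (Suc i, Suc j)"
      using mat_adjoint_index[of "Suc i" M "Suc j"] M by simp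
    with \<open>i < n\<close> \<open>j < n\<close> show "mat_adjoint B $$ (i, j) = B $$ (i, j)" by (simp add: B_def)
  qed (auto simp: B_def)
  moreover have "A = W * M * mat_adjoint W"
    unfolding M_def using unitary_conj_cancel[OF A(1) W(1) unitary_right_inverse[OF W]] ..
  moreover have "B \<in> carrier_mat n n" by (simp add: B_def)
  ultimately show ?thesis using that W MB by blast
qed

theorem hermitian_unitary_diagonalization:
  fixes A :: "complex mat"
  assumes "A \<in> carrier_mat n n" "mat_adjoint A = A"
  obtains U d where "U \<in> carrier_mat n n" "mat_adjoint U * U = 1\<^sub>m n"
    "A = U * real_diag_mat n d * mat_adjoint U"
  using assms
proof (induction n arbitrary: A thesis)
  case 0
  have "A = 1\<^sub>m 0 * real_diag_mat 0 (\<lambda>_. 0) * mat_adjoint (1\<^sub>m 0)"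
    using 0(2) by (intro eq_matI) auto
  with 0(1)[of "1\<^sub>m 0"] show ?case by simp
next
  case (Suc n)
  obtain W e B where W: "W \<in> carrier_mat (Suc n) (Suc n)" "mat_adjoint W * W = 1\<^sub>m (Suc n)"
    and B: "B \<in> carrier_mat n n" "mat_adjoint B = B"
    and AWB: "A = W * block_diag (complex_of_real e) B * mat_adjoint W"
    using hermitian_deflation[OF Suc.prems(2,3)] by blast
  obtain V d where V: "V \<in> carrier_mat n n" "mat_adjoint V * V = 1\<^sub>m n"
    and BV: "B = V * real_diag_mat n d * mat_adjoint V"
    using Suc.IH[OF _ B] by blast
  define V1 where "V1 = block_diag 1 V"
  define d1 where "d1 = case_nat e d"
  have V1: "V1 \<in> carrier_mat (Suc n) (Suc n)" "mat_adjoint V1 * V1 = 1\<^sub>m (Suc n)"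
    using V by (auto simp: V1_def mat_adjoint_block_diag block_diag_mult[of _ n n _ n] block_diag_one)
  have "block_diag (complex_of_real e) B = V1 * real_diag_mat (Suc n) d1 * mat_adjoint V1"
    using V by (simp add: V1_def d1_def BV real_diag_mat_Suc mat_adjoint_block_diag
      block_diag_mult[of _ n n _ n] mult_carrier_mat[of _ n n _ n])
  then have "A = (W * V1) * real_diag_mat (Suc n) d1 * mat_adjoint (W * V1)"
    unfolding AWB using W(1) V1(1) by (simp add: conj_conj_mult)
  with Suc.prems(1)[OF mult_carrier_mat[OF W(1) V1(1)] unitary_mult[OF W V1]] show ?case .
qed

lemma order_prod_linear_factors:
  "Polynomial.order x (\<Prod>a\<leftarrow>as. [:- a, 1:]) = count_list as (x :: 'a :: idom)"
proof (induction as)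
  case Nil
  then show ?case by (simp add: order_0I)
next
  case (Cons a as)
  have "(\<Prod>a\<leftarrow>as. [:- a, 1:]) \<noteq> (0 :: 'a poly)" "[:- a, 1:] \<noteq> (0 :: 'a poly)"
    by auto
  then have "Polynomial.order x ([:- a, 1:] * (\<Prod>a\<leftarrow>as. [:- a, 1:]))
      = Polynomial.order x [:- a, 1:] + Polynomial.order x (\<Prod>a\<leftarrow>as. [:- a, 1:])"
    by (metis order_mult mult_eq_0_iff)
  moreover have "Polynomial.order x [:- a, 1:] = (if a = x then 1 else 0)"
    using order_power_n_n[of x 1] by (simp add: order_0I)
  ultimately show ?case using Cons by simp
qed

lemma sum_order_prod_linear_factors:
  fixes as :: "'a :: idom list"
  defines "p \<equiv> \<Prod>a\<leftarrow>as. [:- a, 1:]"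
  shows "(\<Sum>x\<in>{x. poly p x = 0 \<and> Q x}. Polynomial.order x p) = length (filter Q as)"
proof -
  have roots: "{x. poly p x = 0 \<and> Q x} = set (filter Q as)"
    unfolding p_def by (auto simp: poly_prod_list)
  have "count_list as x = count_list (filter Q as) x" if "Q x" for x
    using that by (induction as) auto
  then have "(\<Sum>x\<in>set (filter Q as). Polynomial.order x p)
      = (\<Sum>x\<in>set (filter Q as). count_list (filter Q as) x)"
    unfolding p_def order_prod_linear_factors by (intro sum.cong) auto
  also have "\<dots> = length (filter Q as)"
    by (rule sum_count_set) auto
  finally show ?thesis unfolding roots .
qed

lemma char_poly_unitary_diag:
  assumes U: "U \<in> carrier_mat n n" "mat_adjoint U * U = 1\<^sub>m n"
  shows "char_poly (U * real_diag_mat n d * mat_adjoint U)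
    = (\<Prod>a\<leftarrow>map (\<lambda>p. complex_of_real (d p)) [0..<n]. [:- a, 1:])"
proof -
  have "similar_mat (U * real_diag_mat n d * mat_adjoint U) (real_diag_mat n d)"
    using U unitary_right_inverse[OF U] by (intro similar_matI[of _ _ U "mat_adjoint U" n]) auto
  then have "char_poly (U * real_diag_mat n d * mat_adjoint U) = char_poly (real_diag_mat n d)"
    by (rule char_poly_similar)
  also have "\<dots> = (\<Prod>a\<leftarrow>diag_mat (real_diag_mat n d). [:- a, 1:])"
    by (rule char_poly_upper_triangular[of _ n]) (auto simp: upper_triangular_def real_diag_mat_def)
  also have "diag_mat (real_diag_mat n d) = map (\<lambda>p. complex_of_real (d p)) [0..<n]"
    by (simp add: diag_mat_def real_diag_mat_def)
  finally show ?thesis .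
qed

lemma sum_order_char_poly_unitary_diag:
  assumes U: "U \<in> carrier_mat n n" "mat_adjoint U * U = 1\<^sub>m n"
  shows "(\<Sum>x\<in>{x. poly (char_poly (U * real_diag_mat n d * mat_adjoint U)) x = 0 \<and> Q x}.
      Polynomial.order x (char_poly (U * real_diag_mat n d * mat_adjoint U)))
    = card {p. p < n \<and> Q (complex_of_real (d p))}"
proof -
  have "length (filter Q (map (\<lambda>p. complex_of_real (d p)) [0..<n]))
      = length (filter (\<lambda>p. Q (complex_of_real (d p))) [0..<n])"
    by (simp add: filter_map comp_def)
  also have "\<dots> = card ({p. Q (complex_of_real (d p))} \<inter> set [0..<n])"
    by (rule distinct_length_filter) simp
  also have "{p. Q (complex_of_real (d p))} \<inter> set [0..<n] = {p. p < n \<and> Q (complex_of_real (d p))}"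
    by auto
  finally show ?thesis
    unfolding char_poly_unitary_diag[OF U] by (subst sum_order_prod_linear_factors)
qed

lemma underdetermined_homogeneous_system:
  fixes F :: "('b \<Rightarrow> 'a :: field) set"
  assumes "finite S" "finite F" "card F < card S"
  shows "\<exists>x. (\<exists>s\<in>S. x s \<noteq> 0) \<and> (\<forall>f\<in>F. (\<Sum>s\<in>S. f s * x s) = 0)"
  using assms
proof (induction S arbitrary: F rule: finite_induct)
  case empty
  then show ?case by simp
next
  case (insert s0 S)
  show ?case
  proof (cases "\<forall>f\<in>F. f s0 = 0")
    case True
    have "(\<Sum>s\<in>insert s0 S. f s * (if s = s0 then 1 else 0)) = f s0" for f :: "'b \<Rightarrow> 'a"
      using insert.hyps by (subst sum.insert) (auto intro!: sum.neutral)
    then show ?thesis using True by (intro exI[of _ "\<lambda>s. if s = s0 then 1 else 0"]) auto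
  next
    case False
    then obtain f0 where f0: "f0 \<in> F" "f0 s0 \<noteq> 0" by blast
    \<comment> \<open>Gaussian elimination of the unknown at \<open>s0\<close> with pivot equation \<open>f0\<close>.\<close>
    define G where "G = (\<lambda>g s. g s - g s0 / f0 s0 * f0 s) ` (F - {f0})"
    have "card G \<le> card (F - {f0})" unfolding G_def by (rule card_image_le) (use insert in simp)
    moreover have "card F > 0" using insert.prems(1) f0(1) card_gt_0_iff by blast
    ultimately have "card G < card S" using insert f0 by (simp add: card_Diff_singleton)
    then obtain x where x: "\<exists>s\<in>S. x s \<noteq> 0" "\<forall>g\<in>G. (\<Sum>s\<in>S. g s * x s) = 0"
      using insert.IH[of G] insert.prems unfolding G_def by blast
    define c where "c = - (\<Sum>s\<in>S. f0 s * x s) / f0 s0"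
    define x' where "x' = x(s0 := c)"
    have sum_ext: "(\<Sum>s\<in>insert s0 S. g s * x' s) = g s0 * c + (\<Sum>s\<in>S. g s * x s)" for g
      using insert.hyps unfolding x'_def by (subst sum.insert) (auto intro!: sum.cong)
    have "(\<Sum>s\<in>insert s0 S. g s * x' s) = 0" if "g \<in> F" for g
    proof (cases "g = f0")
      case True
      then show ?thesis using f0(2) by (simp add: sum_ext c_def)
    next
      case False
      then have "(\<lambda>s. g s - g s0 / f0 s0 * f0 s) \<in> G"
        using that unfolding G_def by blast
      from bspec[OF x(2) this] have "(\<Sum>s\<in>S. (g s - g s0 / f0 s0 * f0 s) * x s) = 0"
        by simp
      then have "(\<Sum>s\<in>S. g s * x s) = g s0 / f0 s0 * (\<Sum>s\<in>S. f0 s * x s)"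
        by (simp add: algebra_simps sum_subtractf sum_distrib_left)
      then show ?thesis using f0(2) by (simp add: sum_ext c_def field_simps)
    qed
    moreover have "\<exists>s\<in>insert s0 S. x' s \<noteq> 0"
      using x(1) insert.hyps unfolding x'_def by force
    ultimately show ?thesis by blast
  qed
qed

lemma unitary_diag_index:
  assumes U: "U \<in> carrier_mat n n" and i: "i < n" and j: "j < n"
  shows "(U * real_diag_mat n d * mat_adjoint U) $$ (i, j)
    = (\<Sum>p<n. U $$ (i, p) * complex_of_real (d p) * cnj (U $$ (j, p)))"
proof -
  have UD: "(U * real_diag_mat n d) $$ (i, p) = U $$ (i, p) * complex_of_real (d p)" if p: "p < n" for p
  proof -
    have "(U * real_diag_mat n d) $$ (i, p)
        = (\<Sum>k = 0..<n. U $$ (i, k) * (if k = p then complex_of_real (d k) else 0))"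
      using U i p by (simp add: scalar_prod_def real_diag_mat_def)
    also have "\<dots> = (\<Sum>k = 0..<n. if k = p then U $$ (i, k) * complex_of_real (d k) else 0)"
      by (rule sum.cong) auto
    finally show ?thesis using p by simp
  qed
  have "(U * real_diag_mat n d * mat_adjoint U) $$ (i, j)
      = (\<Sum>p = 0..<n. (U * real_diag_mat n d) $$ (i, p) * cnj (U $$ (j, p)))"
    using U i j by (auto simp: scalar_prod_def intro!: sum.cong)
  also have "\<dots> = (\<Sum>p<n. U $$ (i, p) * complex_of_real (d p) * cnj (U $$ (j, p)))"
    using UD atLeast0LessThan by (auto intro!: sum.cong)
  finally show ?thesis .
qed

lemma unitary_row_orthonormal:
  assumes U: "U \<in> carrier_mat n n" "mat_adjoint U * U = 1\<^sub>m n" and i: "i < n" and j: "j < n"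
  shows "(\<Sum>p<n. U $$ (i, p) * cnj (U $$ (j, p))) = (if i = j then 1 else 0)"
proof -
  have "(U * mat_adjoint U) $$ (i, j) = (\<Sum>p<n. U $$ (i, p) * cnj (U $$ (j, p)))"
    using U i j by (simp add: scalar_prod_def atLeast0LessThan)
  then show ?thesis using unitary_right_inverse[OF U] i j by simp
qed

lemma unitary_diag_quadratic_form:
  assumes U: "U \<in> carrier_mat n n" and S: "S \<subseteq> {..<n}"
  shows "(\<Sum>i\<in>S. \<Sum>j\<in>S. cnj (z i) * z j * (U * real_diag_mat n d * mat_adjoint U) $$ (i, j))
    = (\<Sum>p<n. complex_of_real (d p * (cmod (\<Sum>j\<in>S. cnj (U $$ (j, p)) * z j))\<^sup>2))"
proof -
  define y where "y p = (\<Sum>j\<in>S. cnj (U $$ (j, p)) * z j)" for p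
  have "(\<Sum>i\<in>S. \<Sum>j\<in>S. cnj (z i) * z j * (U * real_diag_mat n d * mat_adjoint U) $$ (i, j))
      = (\<Sum>i\<in>S. \<Sum>j\<in>S. \<Sum>p<n.
          complex_of_real (d p) * (cnj (z i) * U $$ (i, p)) * (cnj (U $$ (j, p)) * z j))"
  proof (intro sum.cong refl)
    fix i j assume "i \<in> S" "j \<in> S"
    then have "i < n" "j < n" using S by auto
    then show "cnj (z i) * z j * (U * real_diag_mat n d * mat_adjoint U) $$ (i, j)
      = (\<Sum>p<n. complex_of_real (d p) * (cnj (z i) * U $$ (i, p)) * (cnj (U $$ (j, p)) * z j))"
      by (simp add: unitary_diag_index[OF U] sum_distrib_left ac_simps)
  qed
  also have "\<dots> = (\<Sum>p<n. complex_of_real (d p) * (cnj (y p) * y p))"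
    by (simp add: y_def sum_distrib_left sum_distrib_right sum.swap[of _ "{..<n}"] ac_simps)
  also have "\<dots> = (\<Sum>p<n. complex_of_real (d p * (cmod (y p))\<^sup>2))"
    by (metis complex_norm_square mult.commute of_real_mult)
  finally show ?thesis unfolding y_def .
qed

lemma unitary_coords_eq_zero:
  assumes U: "U \<in> carrier_mat n n" "mat_adjoint U * U = 1\<^sub>m n" and S: "S \<subseteq> {..<n}"
    and y0: "\<And>p. p < n \<Longrightarrow> (\<Sum>j\<in>S. cnj (U $$ (j, p)) * z j) = 0" and i: "i \<in> S"
  shows "z i = 0"
proof -
  have "z i = (\<Sum>j\<in>S. if i = j then z j else 0)"
    using i finite_subset[OF S] by simp
  also have "\<dots> = (\<Sum>j\<in>S. (\<Sum>p<n. U $$ (i, p) * cnj (U $$ (j, p))) * z j)"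
  proof (intro sum.cong refl)
    fix j assume "j \<in> S"
    then have "i < n" "j < n" using i S by auto
    then show "(if i = j then z j else 0) = (\<Sum>p<n. U $$ (i, p) * cnj (U $$ (j, p))) * z j"
      by (simp add: unitary_row_orthonormal[OF U])
  qed
  also have "\<dots> = (\<Sum>p<n. U $$ (i, p) * (\<Sum>j\<in>S. cnj (U $$ (j, p)) * z j))"
    by (simp add: sum_distrib_left sum_distrib_right sum.swap[of _ S] ac_simps)
  also have "\<dots> = 0" using y0 by simp
  finally show ?thesis .
qed

theorem card_isotropic_le_nonneg_eigenvalues:
  fixes d :: "nat \<Rightarrow> real"
  assumes U: "U \<in> carrier_mat n n" "mat_adjoint U * U = 1\<^sub>m n" and S: "S \<subseteq> {..<n}"
    and iso: "\<And>x :: nat \<Rightarrow> real. (\<Sum>i\<in>S. \<Sum>j\<in>S.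
      complex_of_real (x i * x j) * (U * real_diag_mat n d * mat_adjoint U) $$ (i, j)) = 0"
  shows "card S \<le> 2 * card {p. p < n \<and> 0 \<le> d p}"
proof (rule ccontr)
  define P where "P = {p. p < n \<and> 0 \<le> d p}"
  assume "\<not> card S \<le> 2 * card {p. p < n \<and> 0 \<le> d p}"
  then have less: "2 * card P < card S" unfolding P_def by simp
  define F where "F = (\<lambda>p j. Re (U $$ (j, p))) ` P \<union> (\<lambda>p j. Im (U $$ (j, p))) ` P"
  have "finite P" by (simp add: P_def)
  then have "finite F" unfolding F_def by simp
  have "card F \<le> card ((\<lambda>p j. Re (U $$ (j, p))) ` P) + card ((\<lambda>p j. Im (U $$ (j, p))) ` P)"
    unfolding F_def by (rule card_Un_le)
  also have "\<dots> \<le> card P + card P"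
    by (intro add_mono card_image_le \<open>finite P\<close>)
  finally have "card F < card S" using less by linarith
  then obtain x :: "nat \<Rightarrow> real" where x: "\<exists>s\<in>S. x s \<noteq> 0" "\<forall>f\<in>F. (\<Sum>s\<in>S. f s * x s) = 0"
    using underdetermined_homogeneous_system[OF finite_subset[OF S finite_lessThan] \<open>finite F\<close>]
    by blast
  define y where "y p = (\<Sum>j\<in>S. cnj (U $$ (j, p)) * complex_of_real (x j))" for p
  have yP: "y p = 0" if "p \<in> P" for p
  proof -
    have "(\<Sum>j\<in>S. Re (U $$ (j, p)) * x j) = 0" "(\<Sum>j\<in>S. Im (U $$ (j, p)) * x j) = 0"
      using x(2) that unfolding F_def by auto
    then show ?thesis by (simp add: y_def complex_eq_iff sum_negf)
  qed
  have "(\<Sum>p<n. complex_of_real (d p * (cmod (y p))\<^sup>2)) = 0"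
    using iso[of x] unitary_diag_quadratic_form[OF U(1) S, of "\<lambda>j. complex_of_real (x j)" d]
    by (simp add: y_def)
  then have sum0: "(\<Sum>p<n. - (d p * (cmod (y p))\<^sup>2)) = 0"
    by (simp only: of_real_sum[symmetric] of_real_eq_0_iff sum_negf neg_equal_0_iff_equal)
  have nonneg: "0 \<le> - (d p * (cmod (y p))\<^sup>2)" if "p < n" for p
    using yP[of p] that by (cases "p \<in> P") (auto simp: P_def mult_nonpos_nonneg)
  have "\<forall>p\<in>{..<n}. - (d p * (cmod (y p))\<^sup>2) = 0"
    using sum_nonneg_eq_0_iff[of "{..<n}" "\<lambda>p. - (d p * (cmod (y p))\<^sup>2)"] sum0 nonneg by simp
  then have y0: "y p = 0" if "p < n" for p
  proof (cases "p \<in> P")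
    case False
    then have "d p \<noteq> 0" using that by (auto simp: P_def)
    moreover have "- (d p * (cmod (y p))\<^sup>2) = 0"
      using \<open>\<forall>p\<in>{..<n}. - (d p * (cmod (y p))\<^sup>2) = 0\<close> that by blast
    ultimately show ?thesis by simp
  qed (rule yP)
  have "complex_of_real (x s) = 0" if "s \<in> S" for s
    using unitary_coords_eq_zero[where z = "\<lambda>j. complex_of_real (x j)", OF U S _ that] y0
    unfolding y_def by blast
  then show False using x(1) by simp
qed

corollary card_isotropic_le_nonpos_eigenvalues:
  fixes d :: "nat \<Rightarrow> real"
  assumes U: "U \<in> carrier_mat n n" "mat_adjoint U * U = 1\<^sub>m n" and S: "S \<subseteq> {..<n}"
    and iso: "\<And>x :: nat \<Rightarrow> real. (\<Sum>i\<in>S. \<Sum>j\<in>S.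
      complex_of_real (x i * x j) * (U * real_diag_mat n d * mat_adjoint U) $$ (i, j)) = 0"
  shows "card S \<le> 2 * card {p. p < n \<and> d p \<le> 0}"
proof -
  have neg: "U * real_diag_mat n (\<lambda>p. - d p) * mat_adjoint U = - (U * real_diag_mat n d * mat_adjoint U)"
    using U(1) by (simp add: real_diag_mat_uminus)
  have "(\<Sum>i\<in>S. \<Sum>j\<in>S.
      complex_of_real (x i * x j) * (U * real_diag_mat n (\<lambda>p. - d p) * mat_adjoint U) $$ (i, j)) = 0"
    for x :: "nat \<Rightarrow> real"
  proof -
    have "(\<Sum>i\<in>S. \<Sum>j\<in>S.
        complex_of_real (x i * x j) * (U * real_diag_mat n (\<lambda>p. - d p) * mat_adjoint U) $$ (i, j))
      = - (\<Sum>i\<in>S. \<Sum>j\<in>S.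
          complex_of_real (x i * x j) * (U * real_diag_mat n d * mat_adjoint U) $$ (i, j))"
      unfolding neg sum_negf[symmetric]
    proof (intro sum.cong refl)
      fix i j assume "i \<in> S" "j \<in> S"
      then have "i < n" "j < n" using S by auto
      then show "complex_of_real (x i * x j) * (- (U * real_diag_mat n d * mat_adjoint U)) $$ (i, j)
        = - (complex_of_real (x i * x j) * (U * real_diag_mat n d * mat_adjoint U) $$ (i, j))"
        using U(1) by simp
    qed
    then show ?thesis using iso[of x] by simp
  qed
  then have "card S \<le> 2 * card {p. p < n \<and> 0 \<le> - d p}"
    by (rule card_isotropic_le_nonneg_eigenvalues[OF U S])
  then show ?thesis by simp
qed

lemma skew_quadratic_form_eq_zero:
  fixes M :: "'b \<Rightarrow> 'b \<Rightarrow> 'a :: field_char_0"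
  assumes skew: "\<And>i j. i \<in> S \<Longrightarrow> j \<in> S \<Longrightarrow> M j i = - M i j"
  shows "(\<Sum>i\<in>S. \<Sum>j\<in>S. x i * x j * M i j) = 0"
proof -
  have "(\<Sum>i\<in>S. \<Sum>j\<in>S. x i * x j * M i j) = (\<Sum>j\<in>S. \<Sum>i\<in>S. x i * x j * M i j)"
    by (rule sum.swap)
  also have "\<dots> = (\<Sum>j\<in>S. \<Sum>i\<in>S. - (x j * x i * M j i))"
  proof (intro sum.cong refl)
    fix j i assume "j \<in> S" "i \<in> S"
    then show "x i * x j * M i j = - (x j * x i * M j i)"
      by (subst skew[of i j]) (simp_all add: algebra_simps)
  qed
  also have "\<dots> = - (\<Sum>j\<in>S. \<Sum>i\<in>S. x j * x i * M j i)"
    by (simp add: sum_negf)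
  finally show ?thesis by simp
qed

lemma herm_adj_carrier: "herm_adj n A \<in> carrier_mat n n"
  by (simp add: herm_adj_def)

lemma mat_adjoint_herm_adj: "mat_adjoint (herm_adj n A) = herm_adj n A"
  by (rule eq_matI) (auto simp: herm_adj_def)

lemma herm_adj_skew:
  assumes "is_digraph n A" "u < n" "v < n" "\<not> ((u, v) \<in> A \<and> (v, u) \<in> A)"
  shows "herm_adj n A $$ (v, u) = - herm_adj n A $$ (u, v)"
  using assms by (auto simp: herm_adj_def is_digraph_def)

lemma ceiling_half_le:
  assumes "m \<le> 2 * c"
  shows "of_int \<lceil>real m / 2\<rceil> \<le> real c"
proof -
  have "real m / 2 \<le> real c" using assms by simp
  then have "\<lceil>real m / 2\<rceil> \<le> int c" by (simp add: ceiling_le_iff)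
  then show ?thesis by linarith
qed

theorem theorem4p3:
  fixes n m :: nat and A :: "(nat \<times> nat) set" and S :: "nat set"
  assumes "is_digraph n A"
    and "S \<subseteq> {0..<n}" and "card S = m"
    and "\<forall>x\<in>S. \<forall>y\<in>S. \<not> ((x, y) \<in> A \<and> (y, x) \<in> A)"
  shows "real (eta_plus n A) \<ge> of_int \<lceil>real m / 2\<rceil>
     \<and> real (eta_minus n A) \<ge> of_int \<lceil>real m / 2\<rceil>"
proof -
  obtain U d where U: "U \<in> carrier_mat n n" "mat_adjoint U * U = 1\<^sub>m n"
    and H: "herm_adj n A = U * real_diag_mat n d * mat_adjoint U"
    using hermitian_unitary_diagonalization[OF herm_adj_carrier mat_adjoint_herm_adj] .
  have S: "S \<subseteq> {..<n}" using assms(2) by auto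
  have skew: "herm_adj n A $$ (j, i) = - herm_adj n A $$ (i, j)" if "i \<in> S" "j \<in> S" for i j
    by (rule herm_adj_skew[OF assms(1)]) (use assms(4) S that in auto)
  have "(\<Sum>i\<in>S. \<Sum>j\<in>S. complex_of_real (x i) * complex_of_real (x j) * herm_adj n A $$ (i, j)) = 0"
    for x :: "nat \<Rightarrow> real"
    by (rule skew_quadratic_form_eq_zero) (rule skew)
  then have iso: "(\<Sum>i\<in>S. \<Sum>j\<in>S.
    complex_of_real (x i * x j) * (U * real_diag_mat n d * mat_adjoint U) $$ (i, j)) = 0" for x
    unfolding H by simp
  have "eta_plus n A = card {p. p < n \<and> 0 \<le> d p}"
    unfolding eta_plus_def H sum_order_char_poly_unitary_diag[OF U] by simp
  moreover have "eta_minus n A = card {p. p < n \<and> d p \<le> 0}"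
    unfolding eta_minus_def H sum_order_char_poly_unitary_diag[OF U] by simp
  ultimately show ?thesis
    using ceiling_half_le[OF card_isotropic_le_nonneg_eigenvalues[OF U S iso]]
      ceiling_half_le[OF card_isotropic_le_nonpos_eigenvalues[OF U S iso]] assms(3)
    by simp
qed

end
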